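(* Let $\epsilon>0$ be sufficiently small. For $\chi\in[0,\pi]$, $\psi\in[-\pi/2,\pi/2]$ set $A_0=e^{i\chi\sigma_z}$, $a_0=i\sigma_x\cos\psi+i\sigma_z\sin\psi$, $c=A_0a_0A_0^{-1}$, and let $$Q(\chi,\psi)=\big[(\,a_0,\ a_0^{-1}c\,a_0A_0,\ a_0^{-1}c\,a_0,\ c\,a_0^{-1}c^{-1}\,)\big]\in R(T^2,2).$$ If $Q(\chi,\psi)=L_s(\phi,\theta)$ for some spherical-polar coordinates $(\phi,\theta)$, then $\chi=\pi/2$, and either $\theta\in\{\pi/2,3\pi/2\}$ or $\phi\in\{0,\pi\}$.
   Context: Pauli matrices standard; $[A,B]=ABA^{-1}B^{-1}$. $R(T^2,2)$ is the space of tuples $(A,B,a,b)\in SU(2)^4$ with $\operatorname{tr}a=\operatorname{tr}b=0$ and $[A,B]ab=1$ modulo simultaneous conjugation (the tuple defining $Q$ satisfies these conditions). For $\nu=\epsilon\sin\phi$, $L_s(\phi,\theta)=[(A,B,a,b)]$ with $a=i\sigma_z$, $h=(\cos^2\nu+\sin^2\nu\sin^2\theta)^{-1/2}(i\sigma_x\cos\nu-i\sigma_z\sin\nu\sin\theta)$, $A=h(\cos\phi+i\sin\phi(\sigma_x\cos\theta+\sigma_y\sin\theta))$, $B=\cos\nu+i\sin\nu(\sigma_x\cos\theta+\sigma_y\sin\theta)$, $b=-ha^{-1}h^{-1}$. ($Q(\chi,\psi)$ is the image of the disk Lagrangian point $[(e^{i\chi\sigma_z},1,a_0,a_0^{-1})]$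 under the mapping class $s\beta_1\alpha_1^{-1}$ of the twice-punctured torus that produces the trefoil in $S^3$.) *)

theory Defs
  imports "HOL-Analysis.Analysis"
begin

type_synonym cmat = "complex^2^2"

definition sigma_x :: cmat where
  "sigma_x = (\<chi> i j. if i = j then 0 else 1)"
definition sigma_y :: cmat where
  "sigma_y = (\<chi> i j. if i = j then 0 else if i = 1 then - \<i> else \<i>)"
definition sigma_z :: cmat where
  "sigma_z = (\<chi> i j. if i \<noteq> j then 0 else if i = 1 then 1 else -1)"

definition csm :: "complex \<Rightarrow> cmat \<Rightarrow> cmat" where
  "csm c M = (\<chi> i j. c * M $ i $ j)"

definition adjoint_mat :: "cmat \<Rightarrow> cmat" where
  "adjoint_mat M = (\<chi> i j. cnj (M $ j $ i))"

definition SU2 :: "cmat set" where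
  "SU2 = {M. M ** adjoint_mat M = mat 1 \<and> det M = 1}"

definition minv :: "cmat \<Rightarrow> cmat" where
  "minv M = matrix_inv M"

definition comm :: "cmat \<Rightarrow> cmat \<Rightarrow> cmat" where
  "comm A B = A ** B ** minv A ** minv B"

type_synonym tup = "cmat \<times> cmat \<times> cmat \<times> cmat"

text \<open>Tuples (A,B,a,b) representing points of R(T^2,2) (before quotienting).\<close>
definition R_T2_2 :: "tup set" where
  "R_T2_2 = {(A,B,a,b). A \<in> SU2 \<and> B \<in> SU2 \<and> a \<in> SU2 \<and> b \<in> SU2 \<and>
                 trace a = 0 \<and> trace b = 0 \<and> comm A B ** a ** b = mat 1}"

definition conj_by :: "cmat \<Rightarrow> cmat \<Rightarrow> cmat" where
  "conj_by g M = g ** M ** minv g"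

text \<open>Equality of the classes [T1] = [T2] in R(T^2,2): simultaneous conjugation.\<close>
definition same_class :: "tup \<Rightarrow> tup \<Rightarrow> bool" where
  "same_class T1 T2 \<longleftrightarrow>
     (\<exists>g\<in>SU2. case T1 of (A,B,a,b) \<Rightarrow>
        T2 = (conj_by g A, conj_by g B, conj_by g a, conj_by g b))"

text \<open>e^{i chi sigma_z} = diag(e^{i chi}, e^{-i chi})\<close>
definition exp_i_sz :: "real \<Rightarrow> cmat" where
  "exp_i_sz x = (\<chi> i j. if i \<noteq> j then 0 else if i = 1 then cis x else cis (- x))"

definition Q :: "real \<Rightarrow> real \<Rightarrow> tup" where
  "Q chi psi = (let A0 = exp_i_sz chi;
                    a0 = csm (\<i> * cos psi) sigma_x + csm (\<i> * sin psi) sigma_z;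
                    c = A0 ** a0 ** minv A0
                in (a0, minv a0 ** c ** a0 ** A0, minv a0 ** c ** a0, c ** minv a0 ** minv c))"

definition Ls :: "real \<Rightarrow> real \<Rightarrow> real \<Rightarrow> tup" where
  "Ls eps phi theta = (let nu = eps * sin phi;
       a = csm \<i> sigma_z;
       h = (1 / sqrt ((cos nu)\<^sup>2 + (sin nu)\<^sup>2 * (sin theta)\<^sup>2)) *\<^sub>R
             (csm (\<i> * cos nu) sigma_x - csm (\<i> * sin nu * sin theta) sigma_z);
       n = csm (cos theta) sigma_x + csm (sin theta) sigma_y;
       A = h ** (csm (cos phi) (mat 1) + csm (\<i> * sin phi) n);
       B = csm (cos nu) (mat 1) + csm (\<i> * sin nu) n;
       b = - (h ** minv a ** minv h)
     in (A, B, a, b))"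

end

theory Submission imports Defs begin

text \<open>Traces of the first generator and of the product of the second and third generators are
  invariant under simultaneous conjugation. For \<open>Q(\<chi>,\<psi>)\<close> the first is \<open>tr a\<^sub>0 = 0\<close>, and the
  second is \<open>tr (X A\<^sub>0 X) = -tr A\<^sub>0 = -2 cos \<chi>\<close> because \<open>X\<close> is a conjugate of \<open>a\<^sub>0\<close>, hence
  \<open>X\<^sup>2 = -1\<close>. For \<open>L\<^sub>s(\<phi>,\<theta>)\<close> the second trace vanishes and the first is a positive multiple of
  \<open>-cos \<nu> sin \<phi> cos \<theta>\<close>, where \<open>cos \<nu> > 0\<close> once \<open>\<epsilon> < 1\<close>.\<close>

lemma minv_eq_right_inverse:
  fixes A B :: cmat
  assumes "A ** B = mat 1"
  shows "minv A = B"
proof -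
  have BA: "B ** A = mat 1"
    using assms matrix_left_right_inverse by blast
  have "\<exists>C. A ** C = mat 1 \<and> C ** A = mat 1"
    using assms BA by blast
  then have "A ** minv A = mat 1 \<and> minv A ** A = mat 1"
    unfolding minv_def matrix_inv_def by (rule someI_ex)
  then show ?thesis
    by (metis BA matrix_mul_assoc matrix_mul_lid matrix_mul_rid)
qed

lemma minv_mult_left:
  fixes A B :: cmat
  assumes "A ** B = mat 1"
  shows "minv A ** A = mat 1"
  using assms matrix_left_right_inverse minv_eq_right_inverse by metis

lemma SU2_minv_mult: "g \<in> SU2 \<Longrightarrow> minv g ** g = mat 1"
  by (rule minv_mult_left[of g "adjoint_mat g"]) (simp add: SU2_def)

lemma trace_conj_by:
  assumes "g \<in> SU2"
  shows "trace (conj_by g M) = trace M"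
proof -
  have "trace (conj_by g M) = trace (minv g ** (g ** M))"
    unfolding conj_by_def by (metis trace_mul_sym)
  then show ?thesis
    using SU2_minv_mult[OF assms] by (metis matrix_mul_assoc matrix_mul_lid)
qed

lemma conj_by_mult:
  assumes "g \<in> SU2"
  shows "conj_by g M ** conj_by g N = conj_by g (M ** N)"
  using SU2_minv_mult[OF assms] unfolding conj_by_def
  by (metis matrix_mul_assoc matrix_mul_rid)

lemma matrix_mul_uminus:
  fixes A B :: cmat
  shows "A ** (- B) = - (A ** B)" "(- B) ** A = - (B ** A)"
  by (simp_all add: vec_eq_iff matrix_matrix_mult_def sum_negf)

lemma conj_square_eq_neg_one:
  fixes P Q M :: cmat
  assumes "P ** Q = mat 1" and "M ** M = - mat 1"
  shows "(P ** M ** Q) ** (P ** M ** Q) = - mat 1"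
proof -
  have "Q ** P = mat 1"
    using assms(1) matrix_left_right_inverse by blast
  then have "(P ** M ** Q) ** (P ** M ** Q) = P ** (M ** M) ** Q"
    by (metis matrix_mul_assoc matrix_mul_rid)
  also have "\<dots> = - mat 1"
    using assms by (simp add: matrix_mul_uminus)
  finally show ?thesis .
qed

lemma trace_sandwich_square_neg_one:
  fixes M N :: cmat
  assumes "M ** M = - mat 1"
  shows "trace (M ** N ** M) = - trace N"
proof -
  have "trace (M ** N ** M) = trace ((M ** M) ** N)"
    by (metis trace_mul_sym matrix_mul_assoc)
  then show ?thesis
    using assms by (simp add: matrix_mul_uminus trace_def sum_negf)
qed

definition trace_invariants :: "tup \<Rightarrow> complex \<times> complex" where
  "trace_invariants = (\<lambda>(A, B, a, b). (trace A, trace (B ** a)))"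

lemma same_class_trace_invariants:
  "same_class T1 T2 \<Longrightarrow> trace_invariants T1 = trace_invariants T2"
  unfolding same_class_def trace_invariants_def
  by (auto simp: conj_by_mult trace_conj_by)

lemma exp_i_sz_inverse: "exp_i_sz x ** exp_i_sz (- x) = mat 1"
  by (simp add: vec_eq_iff forall_2 sum_2 exp_i_sz_def matrix_matrix_mult_def mat_def cis_mult)

lemma trace_exp_i_sz: "trace (exp_i_sz x) = of_real (2 * cos x)"
  by (simp add: trace_def sum_2 exp_i_sz_def cis.ctr complex_eq_iff)

lemma pauli_xz_square:
  fixes psi :: real
  defines "a \<equiv> csm (\<i> * cos psi) sigma_x + csm (\<i> * sin psi) sigma_z"
  shows "a ** a = - mat 1"
proof -
  have "(complex_of_real (cos psi))\<^sup>2 + (complex_of_real (sin psi))\<^sup>2 = 1"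
    by (metis of_real_add of_real_power of_real_1 sin_cos_squared_add2)
  then show ?thesis
    unfolding a_def
    by (simp add: vec_eq_iff forall_2 sum_2 csm_def sigma_z_def sigma_x_def
        matrix_matrix_mult_def mat_def power2_eq_square algebra_simps)
qed

lemma trace_invariants_Q: "trace_invariants (Q chi psi) = (0, - of_real (2 * cos chi))"
proof -
  define A0 where "A0 = exp_i_sz chi"
  define a0 :: cmat where "a0 = csm (\<i> * cos psi) sigma_x + csm (\<i> * sin psi) sigma_z"
  define c where "c = A0 ** a0 ** minv A0"
  define X where "X = minv a0 ** c ** a0"
  have a0_square: "a0 ** a0 = - mat 1"
    unfolding a0_def by (rule pauli_xz_square)
  then have "a0 ** (- a0) = mat 1"
    by (simp add: matrix_mul_uminus)
  then have a0_minv: "minv a0 ** a0 = mat 1"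
    by (rule minv_mult_left)
  have "A0 ** minv A0 = mat 1"
    using minv_eq_right_inverse[OF exp_i_sz_inverse] exp_i_sz_inverse unfolding A0_def by simp
  then have "c ** c = - mat 1"
    unfolding c_def using a0_square by (rule conj_square_eq_neg_one)
  then have "X ** X = - mat 1"
    unfolding X_def by (rule conj_square_eq_neg_one[OF a0_minv])
  then have "trace (X ** A0 ** X) = - of_real (2 * cos chi)"
    unfolding A0_def by (simp add: trace_sandwich_square_neg_one trace_exp_i_sz)
  moreover have "trace a0 = 0"
    unfolding a0_def by (simp add: trace_def sum_2 csm_def sigma_z_def sigma_x_def)
  ultimately show ?thesis
    unfolding Q_def Let_def trace_invariants_def A0_def a0_def c_def X_def by simp
qed

lemma trace_invariants_Ls:
  fixes eps phi theta :: real
  defines "nu \<equiv> eps * sin phi"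
  shows "trace_invariants (Ls eps phi theta) =
    (of_real (- 2 * cos nu * sin phi * cos theta / sqrt ((cos nu)\<^sup>2 + (sin nu)\<^sup>2 * (sin theta)\<^sup>2)), 0)"
  unfolding Ls_def Let_def trace_invariants_def nu_def
  by (simp add: trace_def sum_2 csm_def sigma_z_def sigma_x_def sigma_y_def
      matrix_matrix_mult_def mat_def algebra_simps)
    (simp add: scaleR_conv_of_real algebra_simps)

lemma cos_eq_zero_in_0_pi: "chi \<in> {0..pi} \<Longrightarrow> cos chi = 0 \<Longrightarrow> chi = pi/2"
  by (metis atLeastAtMost_iff cos_inj_pi cos_pi_half pi_half_ge_zero pi_half_le_two pi_ge_two
      order_trans field_sum_of_halves le_add_same_cancel1)

lemma sin_eq_zero_in_0_pi:
  assumes "phi \<in> {0..pi}" and "sin phi = 0"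
  shows "phi \<in> {0, pi}"
proof -
  obtain i :: int where i: "phi = i * pi"
    using assms(2) sin_zero_iff_int2 by blast
  have "0 \<le> real_of_int i" "real_of_int i \<le> 1"
    using assms(1) i pi_gt_zero by (auto simp: zero_le_mult_iff mult_le_cancel_right2)
  then have "i = 0 \<or> i = 1" by linarith
  then show ?thesis using i by auto
qed

lemma cos_eq_zero_in_0_2pi:
  assumes "theta \<in> {0..<2*pi}" and "cos theta = 0"
  shows "theta \<in> {pi/2, 3*pi/2}"
proof -
  obtain n :: int where n: "theta = n * pi + pi/2"
    using assms(2) cos_zero_iff_int2 by blast
  have "0 \<le> (real_of_int n + 1/2) * pi" "(real_of_int n + 1/2) * pi < 2 * pi"
    using assms(1) n by (auto simp: algebra_simps)
  then have "0 \<le> real_of_int n + 1/2" "real_of_int n + 1/2 < 2"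
    using pi_gt_zero by (auto simp: zero_le_mult_iff mult_less_cancel_right)
  then have "n = 0 \<or> n = 1" by linarith
  then show ?thesis using n by auto
qed

lemma cos_mult_sin_pos:
  fixes eps phi :: real
  assumes "0 < eps" and "eps < 1"
  shows "cos (eps * sin phi) > 0"
proof -
  have "\<bar>eps * sin phi\<bar> \<le> eps"
    using assms by (simp add: abs_mult mult_left_le)
  then have "\<bar>eps * sin phi\<bar> < pi/2"
    using assms pi_gt3 by linarith
  then show ?thesis
    by (intro cos_gt_zero_pi) auto
qed

theorem mainTheorem15:
  shows "\<exists>eps0 > 0. \<forall>eps. 0 < eps \<and> eps < eps0 \<longrightarrow>
     (\<forall>chi psi phi theta.
        chi \<in> {0..pi} \<and> psi \<in> {-pi/2..pi/2} \<and>
        phi \<in> {0..pi} \<and> theta \<in> {0..<2*pi} \<and>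
        same_class (Q chi psi) (Ls eps phi theta) \<longrightarrow>
        chi = pi/2 \<and> (theta \<in> {pi/2, 3*pi/2} \<or> phi \<in> {0, pi}))"
proof (intro exI[of _ 1] conjI allI impI)
  fix eps chi psi phi theta :: real
  assume eps: "0 < eps \<and> eps < 1"
  assume H: "chi \<in> {0..pi} \<and> psi \<in> {-pi/2..pi/2} \<and> phi \<in> {0..pi} \<and> theta \<in> {0..<2*pi} \<and>
    same_class (Q chi psi) (Ls eps phi theta)"
  define nu where "nu = eps * sin phi"
  have invs: "trace_invariants (Q chi psi) = trace_invariants (Ls eps phi theta)"
    using H same_class_trace_invariants by blast
  then have "cos chi = 0"
    by (simp add: trace_invariants_Q trace_invariants_Ls)
  then show "chi = pi/2"
    using H cos_eq_zero_in_0_pi by blast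
  have "cos nu > 0"
    unfolding nu_def using eps by (simp add: cos_mult_sin_pos)
  then have "sqrt ((cos nu)\<^sup>2 + (sin nu)\<^sup>2 * (sin theta)\<^sup>2) > 0"
    by (simp add: add_pos_nonneg)
  moreover have "cos nu * sin phi * cos theta / sqrt ((cos nu)\<^sup>2 + (sin nu)\<^sup>2 * (sin theta)\<^sup>2) = 0"
    using invs by (simp add: trace_invariants_Q trace_invariants_Ls nu_def)
  ultimately have "sin phi = 0 \<or> cos theta = 0"
    using \<open>cos nu > 0\<close> by simp
  then show "theta \<in> {pi/2, 3*pi/2} \<or> phi \<in> {0, pi}"
    using H sin_eq_zero_in_0_pi cos_eq_zero_in_0_2pi by blast
qed simp

end
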